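(* Each of the following families of functions $\omega_k\colon \mathbb{N}_0\to\mathbb{N}$, indexed by $k\in\mathbb{N}$, is a convex growth family: (1) $\omega_k(n)=k^n$; (2) $\omega_k(n)=2^{kn}$; (3) $\omega_k(n)=k^n\cdot n!$; (4) $\omega_k(n)=k^{n^2}$; (5) $\omega_k(n)=k^n (n!)^k$.
   Context: $\mathbb{N}=\{1,2,3,\dots\}$, $\mathbb{N}_0=\mathbb{N}\cup\{0\}$. A family $(\omega_k)_{k\in\mathbb{N}}$ of functions $\omega_k\colon\mathbb{N}_0\to\mathbb{N}$ is a growth family if for all $k\in\mathbb{N}$ and $n,m\in\mathbb{N}_0$: (W1) $\omega_k(0)=1$ and $\omega_k(n)\le\omega_{k+1}(n)$; (W2) $\omega_k(n)\omega_k(m)\le\omega_k(n+m)$; (W3) for every $k_1\in\mathbb{N}$ there is $k_2\ge k_1$ with $\omega_{k_2}(n)\ge 2^n\omega_{k_1}(n)$ for all $n\in\mathbb{N}_0$. A growth family is convex if for every $k_1$ one can choose $k_2\ge k_1$ as in (W3) such that in addition for every $k_3\ge k_2$ there exists $\alpha\in\,]0,1[$ with $\omega_{k_1}(n)^\alpha\omega_{k_3}(n)^{1-\alpha}\le\omega_{k_2}(n)$ for all $n\in\mathbb{N}_0$. *)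

theory Defs
  imports Complex_Main
begin

text \<open>A family indexed by k in the positive naturals, each member a function
  from nat (including 0) to the positive naturals. Indices k = 0 are ignored.\<close>

definition growth_family :: "(nat \<Rightarrow> nat \<Rightarrow> nat) \<Rightarrow> bool" where
  "growth_family \<omega> \<longleftrightarrow>
     (\<forall>k\<ge>1. \<forall>n. 1 \<le> \<omega> k n) \<and>
     (\<forall>k\<ge>1. \<omega> k 0 = 1 \<and> (\<forall>n. \<omega> k n \<le> \<omega> (k + 1) n)) \<and>
     (\<forall>k\<ge>1. \<forall>n m. \<omega> k n * \<omega> k m \<le> \<omega> k (n + m)) \<and>
     (\<forall>k1\<ge>1. \<exists>k2\<ge>k1. \<forall>n. 2 ^ n * \<omega> k1 n \<le> \<omega> k2 n)"

definition convex_growth_family :: "(nat \<Rightarrow> nat \<Rightarrow> nat) \<Rightarrow> bool" where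
  "convex_growth_family \<omega> \<longleftrightarrow>
     growth_family \<omega> \<and>
     (\<forall>k1\<ge>1. \<exists>k2\<ge>k1. (\<forall>n. 2 ^ n * \<omega> k1 n \<le> \<omega> k2 n) \<and>
        (\<forall>k3\<ge>k2. \<exists>\<alpha>::real. 0 < \<alpha> \<and> \<alpha> < 1 \<and>
           (\<forall>n. real (\<omega> k1 n) powr \<alpha> * real (\<omega> k3 n) powr (1 - \<alpha>) \<le> real (\<omega> k2 n))))"

end

theory Submission
  imports Defs
begin

text \<open>The convexity condition is a statement about logarithms: it asks for
  \<open>\<alpha> ln \<omega>\<^sub>k\<^sub>1 n + (1 - \<alpha>) ln \<omega>\<^sub>k\<^sub>3 n \<le> ln \<omega>\<^sub>k\<^sub>2 n\<close> uniformly in \<open>n\<close>.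
  In each family \<open>ln \<omega>\<^sub>k n\<close> is a sum of terms \<open>c k * u n\<close> with \<open>u \<ge> 0\<close> and \<open>c\<close> either
  constant or strictly increasing. A constant term is harmless, and for an increasing one
  the weighted means \<open>\<alpha> c k\<^sub>1 + (1 - \<alpha>) c k\<^sub>3\<close> tend to \<open>c k\<^sub>1 < c k\<^sub>2\<close> as \<open>\<alpha> \<rightarrow> 1\<close>,
  which yields one \<open>\<alpha>\<close> that works for all \<open>n\<close> at once. The same choice
  \<open>k\<^sub>2 = 2 k\<^sub>1\<close> gives the doubling condition.\<close>

text \<open>Asking for the bound for all \<open>\<alpha>\<close> close to 1, rather than for a single \<open>\<alpha>\<close>,
  makes the notion closed under products.\<close>

definition geom_mean_bounded :: "(nat \<Rightarrow> real) \<Rightarrow> (nat \<Rightarrow> real) \<Rightarrow> (nat \<Rightarrow> real) \<Rightarrow> bool" where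
  "geom_mean_bounded f h g \<longleftrightarrow>
     (\<forall>\<^sub>F \<alpha> in at_left 1. \<forall>n. f n powr \<alpha> * h n powr (1 - \<alpha>) \<le> g n)"

lemma geom_mean_boundedD:
  assumes "geom_mean_bounded f h g"
  shows "\<exists>\<alpha>. 0 < \<alpha> \<and> \<alpha> < 1 \<and> (\<forall>n. f n powr \<alpha> * h n powr (1 - \<alpha>) \<le> g n)"
proof -
  have "\<forall>\<^sub>F \<alpha> in at_left (1::real). \<alpha> \<in> {0<..<1} \<and> (\<forall>n. f n powr \<alpha> * h n powr (1 - \<alpha>) \<le> g n)"
    using eventually_at_left_real[of 0 1] assms unfolding geom_mean_bounded_def
    by (auto elim: eventually_elim2)
  from eventually_happens[OF this] show ?thesis by auto
qed

lemma geom_mean_bounded_exp: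
  assumes "\<And>n. 0 \<le> u n" and "a < b"
  shows "geom_mean_bounded (\<lambda>n. exp (u n * a)) (\<lambda>n. exp (u n * c)) (\<lambda>n. exp (u n * b))"
proof -
  have "((\<lambda>\<alpha>. \<alpha> * a + (1 - \<alpha>) * c) \<longlongrightarrow> 1 * a + (1 - 1) * c) (at_left 1)"
    by (intro tendsto_intros)
  then have "\<forall>\<^sub>F \<alpha> in at_left 1. \<alpha> * a + (1 - \<alpha>) * c < b"
    using \<open>a < b\<close> by (intro order_tendstoD) auto
  then show ?thesis
    unfolding geom_mean_bounded_def
  proof (rule eventually_mono, intro allI)
    fix \<alpha> n assume "\<alpha> * a + (1 - \<alpha>) * c < b"
    then have "u n * (\<alpha> * a + (1 - \<alpha>) * c) \<le> u n * b"
      using assms(1) by (intro mult_left_mono) auto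
    then show "exp (u n * a) powr \<alpha> * exp (u n * c) powr (1 - \<alpha>) \<le> exp (u n * b)"
      by (simp add: exp_powr_real flip: exp_add) (simp add: algebra_simps)
  qed
qed

lemma geom_mean_bounded_power_base:
  fixes a b c :: real
  assumes "0 < a" "a < b" "0 < c"
  shows "geom_mean_bounded (\<lambda>n. a ^ p n) (\<lambda>n. c ^ p n) (\<lambda>n. b ^ p n)"
proof -
  have "geom_mean_bounded (\<lambda>n. exp (real (p n) * ln a)) (\<lambda>n. exp (real (p n) * ln c))
          (\<lambda>n. exp (real (p n) * ln b))"
    using assms by (intro geom_mean_bounded_exp) auto
  with assms show ?thesis by (simp add: exp_of_nat_mult)
qed

lemma geom_mean_bounded_power_exponent:
  fixes a b c :: nat
  assumes "\<And>n. 1 \<le> x n" and "a < b"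
  shows "geom_mean_bounded (\<lambda>n. x n ^ a) (\<lambda>n. x n ^ c) (\<lambda>n. x n ^ b)"
proof -
  have "geom_mean_bounded (\<lambda>n. exp (ln (x n) * real a)) (\<lambda>n. exp (ln (x n) * real c))
          (\<lambda>n. exp (ln (x n) * real b))"
    using assms by (intro geom_mean_bounded_exp) auto
  moreover have "0 < x n" for n using assms(1)[of n] by linarith
  ultimately show ?thesis by (simp add: mult.commute[of "ln _"] exp_of_nat_mult)
qed

lemma geom_mean_bounded_refl:
  assumes "\<And>n. 0 \<le> f n"
  shows "geom_mean_bounded f f f"
  unfolding geom_mean_bounded_def
proof (rule always_eventually, intro allI)
  fix \<alpha> n
  show "f n powr \<alpha> * f n powr (1 - \<alpha>) \<le> f n"
    using assms[of n] by (cases "f n = 0") (simp_all flip: powr_add)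
qed

lemma geom_mean_bounded_mult:
  assumes "geom_mean_bounded f1 h1 g1" "geom_mean_bounded f2 h2 g2"
    and "\<And>n. 0 \<le> f1 n" "\<And>n. 0 \<le> f2 n" "\<And>n. 0 \<le> h1 n" "\<And>n. 0 \<le> h2 n"
  shows "geom_mean_bounded (\<lambda>n. f1 n * f2 n) (\<lambda>n. h1 n * h2 n) (\<lambda>n. g1 n * g2 n)"
  using assms(1,2) unfolding geom_mean_bounded_def
proof (rule eventually_elim2, intro allI)
  fix \<alpha> n
  assume "\<forall>n. f1 n powr \<alpha> * h1 n powr (1 - \<alpha>) \<le> g1 n" "\<forall>n. f2 n powr \<alpha> * h2 n powr (1 - \<alpha>) \<le> g2 n"
  then have "(f1 n powr \<alpha> * h1 n powr (1 - \<alpha>)) * (f2 n powr \<alpha> * h2 n powr (1 - \<alpha>)) \<le> g1 n * g2 n"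
    by (intro mult_mono') auto
  then show "(f1 n * f2 n) powr \<alpha> * (h1 n * h2 n) powr (1 - \<alpha>) \<le> g1 n * g2 n"
    using assms(3-6) by (simp add: powr_mult mult_ac)
qed

lemma convex_growth_family_doublingI:
  assumes "\<And>k n. 1 \<le> k \<Longrightarrow> 1 \<le> \<omega> k n"
    and "\<And>k. 1 \<le> k \<Longrightarrow> \<omega> k 0 = 1"
    and "\<And>k n. 1 \<le> k \<Longrightarrow> \<omega> k n \<le> \<omega> (k + 1) n"
    and "\<And>k n m. 1 \<le> k \<Longrightarrow> \<omega> k n * \<omega> k m \<le> \<omega> k (n + m)"
    and doubling: "\<And>k n. 1 \<le> k \<Longrightarrow> 2 ^ n * \<omega> k n \<le> \<omega> (2 * k) n"
    and interpolation: "\<And>k1 k3. 1 \<le> k1 \<Longrightarrow> 2 * k1 \<le> k3 \<Longrightarrow>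
      geom_mean_bounded (\<lambda>n. real (\<omega> k1 n)) (\<lambda>n. real (\<omega> k3 n)) (\<lambda>n. real (\<omega> (2 * k1) n))"
  shows "convex_growth_family \<omega>"
  unfolding convex_growth_family_def growth_family_def
proof (intro conjI allI impI)
  fix k1 :: nat assume k1: "1 \<le> k1"
  then show "\<exists>k2\<ge>k1. \<forall>n. 2 ^ n * \<omega> k1 n \<le> \<omega> k2 n"
    using doubling by (intro exI[of _ "2 * k1"]) auto
  show "\<exists>k2\<ge>k1. (\<forall>n. 2 ^ n * \<omega> k1 n \<le> \<omega> k2 n) \<and>
          (\<forall>k3\<ge>k2. \<exists>\<alpha>::real. 0 < \<alpha> \<and> \<alpha> < 1 \<and>
             (\<forall>n. real (\<omega> k1 n) powr \<alpha> * real (\<omega> k3 n) powr (1 - \<alpha>) \<le> real (\<omega> k2 n)))"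
  proof (intro exI[of _ "2 * k1"] conjI allI impI)
    fix k3 assume "2 * k1 \<le> k3"
    with k1 show "\<exists>\<alpha>::real. 0 < \<alpha> \<and> \<alpha> < 1 \<and>
        (\<forall>n. real (\<omega> k1 n) powr \<alpha> * real (\<omega> k3 n) powr (1 - \<alpha>) \<le> real (\<omega> (2 * k1) n))"
      by (intro geom_mean_boundedD interpolation)
  qed (use k1 doubling in auto)
qed (use assms(1-4) in blast)+

lemma fact_mult_fact_le: "fact m * fact n \<le> (fact (m + n) :: nat)"
proof -
  have "fact m * fact n * (m + n choose m) = (fact (m + n) :: nat)"
    using binomial_fact_lemma[of m "m + n"] by simp
  moreover have "1 \<le> m + n choose m"
    using zero_less_binomial[of m "m + n"] by linarith
  ultimately show ?thesis
    by (metis mult_le_mono2 nat_mult_1_right)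
qed

lemma convex_growth_family_power: "convex_growth_family (\<lambda>k n. k ^ n)"
proof (rule convex_growth_family_doublingI)
  fix k1 k3 :: nat assume "1 \<le> k1" "2 * k1 \<le> k3"
  then show "geom_mean_bounded (\<lambda>n. real (k1 ^ n)) (\<lambda>n. real (k3 ^ n)) (\<lambda>n. real ((2 * k1) ^ n))"
    using geom_mean_bounded_power_base[of "real k1" "real (2 * k1)" "real k3"] by simp
next
  fix k n :: nat
  show "k ^ n \<le> (k + 1) ^ n" by (rule power_mono) auto
qed (simp_all add: one_le_power power_add power_mult_distrib)


lemma convex_growth_family_two_power: "convex_growth_family (\<lambda>k n. 2 ^ (k * n))"
proof (rule convex_growth_family_doublingI)
  fix k1 k3 :: nat assume "1 \<le> k1" "2 * k1 \<le> k3"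
  have power_swap: "real (2 ^ (k * n)) = (2 ^ n) ^ k" for k n :: nat
    by (simp add: mult.commute[of k] power_mult)
  show "geom_mean_bounded (\<lambda>n. real (2 ^ (k1 * n))) (\<lambda>n. real (2 ^ (k3 * n)))
      (\<lambda>n. real (2 ^ (2 * k1 * n)))"
    unfolding power_swap using \<open>1 \<le> k1\<close> by (intro geom_mean_bounded_power_exponent) auto
next
  fix k n :: nat assume "1 \<le> k"
  then show "2 ^ n * 2 ^ (k * n) \<le> (2::nat) ^ (2 * k * n)"
    by (simp flip: power_add)
next
  fix k n :: nat
  show "(2::nat) ^ (k * n) \<le> 2 ^ ((k + 1) * n)" by (rule power_increasing) auto
qed (simp_all flip: power_add add: distrib_left)

lemma convex_growth_family_power_fact: "convex_growth_family (\<lambda>k n. k ^ n * fact n)"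
proof (rule convex_growth_family_doublingI)
  fix k1 k3 :: nat assume "1 \<le> k1" "2 * k1 \<le> k3"
  then have "geom_mean_bounded (\<lambda>n. real k1 ^ n * fact n) (\<lambda>n. real k3 ^ n * fact n)
      (\<lambda>n. real (2 * k1) ^ n * fact n)"
    by (intro geom_mean_bounded_mult geom_mean_bounded_power_base geom_mean_bounded_refl) auto
  then show "geom_mean_bounded (\<lambda>n. real (k1 ^ n * fact n)) (\<lambda>n. real (k3 ^ n * fact n))
      (\<lambda>n. real ((2 * k1) ^ n * fact n))"
    by simp
next
  fix k n m :: nat
  have "k ^ n * fact n * (k ^ m * fact m) = k ^ (n + m) * (fact n * fact m)"
    by (simp add: power_add algebra_simps)
  also have "\<dots> \<le> k ^ (n + m) * fact (n + m)"
    by (intro mult_left_mono fact_mult_fact_le) auto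
  finally show "k ^ n * fact n * (k ^ m * fact m) \<le> k ^ (n + m) * fact (n + m)" .
next
  fix k n :: nat
  show "k ^ n * fact n \<le> (k + 1) ^ n * fact n"
    by (intro mult_right_mono power_mono) auto
next
  fix k n :: nat assume "1 \<le> k"
  then show "1 \<le> k ^ n * fact n"
    by (metis fact_ge_1 mult_le_mono one_le_power nat_mult_1)
qed (simp_all add: power_mult_distrib)

lemma convex_growth_family_power_square: "convex_growth_family (\<lambda>k n. k ^ (n ^ 2))"
proof (rule convex_growth_family_doublingI)
  fix k1 k3 :: nat assume "1 \<le> k1" "2 * k1 \<le> k3"
  then show "geom_mean_bounded (\<lambda>n. real (k1 ^ n\<^sup>2)) (\<lambda>n. real (k3 ^ n\<^sup>2))
      (\<lambda>n. real ((2 * k1) ^ n\<^sup>2))"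
    using geom_mean_bounded_power_base[of "real k1" "real (2 * k1)" "real k3"] by simp
next
  fix k n m :: nat assume "1 \<le> k"
  then have "k ^ (n\<^sup>2 + m\<^sup>2) \<le> k ^ (n + m)\<^sup>2"
    by (intro power_increasing) (auto simp: power2_sum)
  then show "k ^ n\<^sup>2 * k ^ m\<^sup>2 \<le> k ^ (n + m)\<^sup>2"
    by (simp add: power_add)
next
  fix k n :: nat
  have "(2::nat) ^ n \<le> 2 ^ n\<^sup>2"
    by (intro power_increasing) (auto simp: power2_eq_square)
  then show "2 ^ n * k ^ n\<^sup>2 \<le> (2 * k) ^ n\<^sup>2"
    by (simp add: power_mult_distrib)
next
  fix k n :: nat
  show "k ^ n\<^sup>2 \<le> (k + 1) ^ n\<^sup>2" by (rule power_mono) auto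
qed (simp_all add: one_le_power)

lemma convex_growth_family_power_fact_power:
  "convex_growth_family (\<lambda>k n. k ^ n * fact n ^ k)"
proof (rule convex_growth_family_doublingI)
  fix k1 k3 :: nat assume "1 \<le> k1" "2 * k1 \<le> k3"
  then have "geom_mean_bounded (\<lambda>n. real k1 ^ n * fact n ^ k1) (\<lambda>n. real k3 ^ n * fact n ^ k3)
      (\<lambda>n. real (2 * k1) ^ n * fact n ^ (2 * k1))"
    by (intro geom_mean_bounded_mult geom_mean_bounded_power_base geom_mean_bounded_power_exponent)
      auto
  then show "geom_mean_bounded (\<lambda>n. real (k1 ^ n * fact n ^ k1)) (\<lambda>n. real (k3 ^ n * fact n ^ k3))
      (\<lambda>n. real ((2 * k1) ^ n * fact n ^ (2 * k1)))"
    by simp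
next
  fix k n m :: nat
  have "k ^ n * fact n ^ k * (k ^ m * fact m ^ k) = k ^ (n + m) * (fact n * fact m) ^ k"
    by (simp add: power_add power_mult_distrib algebra_simps)
  also have "\<dots> \<le> k ^ (n + m) * fact (n + m) ^ k"
    by (intro mult_left_mono power_mono fact_mult_fact_le) auto
  finally show "k ^ n * fact n ^ k * (k ^ m * fact m ^ k) \<le> k ^ (n + m) * fact (n + m) ^ k" .
next
  fix k n :: nat
  have "(fact n :: nat) ^ k \<le> fact n ^ (k + 1)" by (rule power_increasing) auto
  then show "k ^ n * fact n ^ k \<le> (k + 1) ^ n * fact n ^ (k + 1)"
    by (intro mult_mono power_mono) auto
next
  fix k n :: nat
  have "(fact n :: nat) ^ k \<le> fact n ^ (2 * k)" by (rule power_increasing) auto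
  then show "2 ^ n * (k ^ n * fact n ^ k) \<le> (2 * k) ^ n * fact n ^ (2 * k)"
    by (simp add: power_mult_distrib)
next
  fix k n :: nat assume "1 \<le> k"
  then show "1 \<le> k ^ n * fact n ^ k"
    by (metis fact_ge_1 mult_le_mono one_le_power nat_mult_1)
qed simp

theorem proposition1p4:
  shows "convex_growth_family (\<lambda>k n. k ^ n) \<and>
         convex_growth_family (\<lambda>k n. 2 ^ (k * n)) \<and>
         convex_growth_family (\<lambda>k n. k ^ n * fact n) \<and>
         convex_growth_family (\<lambda>k n. k ^ (n ^ 2)) \<and>
         convex_growth_family (\<lambda>k n. k ^ n * (fact n) ^ k)"
  using convex_growth_family_power convex_growth_family_two_power convex_growth_family_power_fact
    convex_growth_family_power_square convex_growth_family_power_fact_power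
  by blast

end
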